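(* Let $\Omega\subset\mathbb C$ be a domain, $x\in\Omega$, and let $(f_n)$ be a sequence of holomorphic functions $\Omega\to\mathbb C$ which is not normal on any neighborhood of $x$. Then there is a subsequence $(f_{n_k})$ such that no subsequence of $(f_{n_k})$ converges uniformly (with respect to the spherical metric) on any neighborhood of $x$.
   Context: Convergence is understood uniformly with respect to the spherical metric on $\hat{\mathbb C}$ (limit $\equiv\infty$ allowed). A sequence of holomorphic functions on an open set $U$ is normal on $U$ if each of its subsequences has a further subsequence converging locally uniformly on $U$ in this sense. *)

theory Defs
  imports "HOL-Analysis.Analysis"
begin

text \<open>The Riemann sphere is represented as complex option: Some z is the finite
point z, None is the point at infinity.  The spherical (chordal) metric:\<close>

fun chordal :: "complex option \<Rightarrow> complex option \<Rightarrow> real" where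
  "chordal (Some z) (Some w) =
     2 * cmod (z - w) / (sqrt (1 + (cmod z)\<^sup>2) * sqrt (1 + (cmod w)\<^sup>2))"
| "chordal (Some z) None = 2 / sqrt (1 + (cmod z)\<^sup>2)"
| "chordal None (Some w) = 2 / sqrt (1 + (cmod w)\<^sup>2)"
| "chordal None None = 0"

text \<open>Uniform convergence on a set K w.r.t. the spherical metric; the limit
is a function into the Riemann sphere (so the limit identically infinity is allowed).\<close>

definition sph_unif_conv_on ::
  "(nat \<Rightarrow> complex \<Rightarrow> complex) \<Rightarrow> (complex \<Rightarrow> complex option) \<Rightarrow> complex set \<Rightarrow> bool" where
  "sph_unif_conv_on F g K \<longleftrightarrow>
     (\<forall>e>0. \<forall>\<^sub>F n in sequentially. \<forall>z\<in>K. chordal (Some (F n z)) (g z) < e)"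

definition sph_loc_unif_conv_on ::
  "(nat \<Rightarrow> complex \<Rightarrow> complex) \<Rightarrow> (complex \<Rightarrow> complex option) \<Rightarrow> complex set \<Rightarrow> bool" where
  "sph_loc_unif_conv_on F g U \<longleftrightarrow>
     (\<forall>K. compact K \<and> K \<subseteq> U \<longrightarrow> sph_unif_conv_on F g K)"

definition normal_seq_on :: "(nat \<Rightarrow> complex \<Rightarrow> complex) \<Rightarrow> complex set \<Rightarrow> bool" where
  "normal_seq_on F U \<longleftrightarrow>
     (\<forall>r::nat\<Rightarrow>nat. strict_mono r \<longrightarrow>
        (\<exists>s g. strict_mono s \<and> sph_loc_unif_conv_on (F \<circ> r \<circ> s) g U))"

end

theory Submission
  imports Defs "HOL-Complex_Analysis.Great_Picard"
begin

text \<open>If from some index on the f_n had spherical oscillation less than 1/2 on a fixed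
ball around x, then near each point either f_n or 1/f_n would be bounded by 2, so the Cauchy
estimates together with the inversion invariance of the chordal metric would make the tail
spherically equicontinuous, and Arzela-Ascoli would give normality near x. Hence for every k
infinitely many f_n oscillate by at least 1/2 on the ball of radius \<rho>/(k+1), and we pick
such indices n_k increasing. If a subsequence of (f_{n_k}) converged uniformly on a
neighbourhood of x, comparing it with one fixed continuous member would show that its terms
eventually oscillate by less than 1/2 on one fixed ball around x, which contradicts the
shrinking radii.\<close>

text \<open>Stereographic projection onto the unit sphere of \<complex> \<times> \<real>; the chordal metric is
the Euclidean distance of the projected points.\<close>

fun stereo :: "complex option \<Rightarrow> complex \<times> real" where
  "stereo None = (0, 1)"
| "stereo (Some z) = ((2 / (1 + (cmod z)\<^sup>2)) *\<^sub>R z, ((cmod z)\<^sup>2 - 1) / (1 + (cmod z)\<^sup>2))"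

lemma norm_stereo: "norm (stereo a) = 1"
proof (cases a)
  case (Some z)
  define c where "c = (cmod z)\<^sup>2"
  have "c \<ge> 0" by (simp add: c_def)
  have "(norm (stereo a))\<^sup>2 = (2/(1+c))\<^sup>2 * c + ((c-1)/(1+c))\<^sup>2"
    by (simp add: Some c_def norm_Pair power_divide power_mult_distrib)
  also have "\<dots> = 1"
    using \<open>c \<ge> 0\<close> by (simp add: divide_simps) algebra
  finally show ?thesis
    using power2_eq_iff_nonneg[of "norm (stereo a)" 1] by simp
qed simp

lemma chordal_eq_dist_stereo: "chordal a b = dist (stereo a) (stereo b)"
proof -
  have Some_None: "chordal (Some z) None = dist (stereo (Some z)) (stereo None)" for z
  proof -
    define c where "c = (cmod z)\<^sup>2"
    have "c \<ge> 0" by (simp add: c_def)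
    have "(dist (stereo (Some z)) (stereo None))\<^sup>2 = (2/(1+c))\<^sup>2 * c + ((c-1)/(1+c) - 1)\<^sup>2"
      by (simp add: c_def dist_prod_def dist_norm power_divide power_mult_distrib power2_commute)
    also have "\<dots> = (2 / sqrt (1 + c))\<^sup>2"
      using \<open>c \<ge> 0\<close> by (simp add: divide_simps) algebra
    finally show ?thesis by (simp add: c_def power2_eq_iff_nonneg)
  qed
  have Some_Some: "chordal (Some z) (Some w) = dist (stereo (Some z)) (stereo (Some w))" for z w
  proof -
    define A where "A = 1 + (Re z)\<^sup>2 + (Im z)\<^sup>2"
    define B where "B = 1 + (Re w)\<^sup>2 + (Im w)\<^sup>2"
    have A: "A > 0" "B > 0" unfolding A_def B_def by (simp_all add: add_pos_nonneg)
    have "(dist (stereo (Some z)) (stereo (Some w)))\<^sup>2 =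
        (2*Re z/A - 2*Re w/B)\<^sup>2 + (2*Im z/A - 2*Im w/B)\<^sup>2
          + (((Re z)\<^sup>2+(Im z)\<^sup>2-1)/A - ((Re w)\<^sup>2+(Im w)\<^sup>2-1)/B)\<^sup>2"
      by (simp add: dist_prod_def dist_norm cmod_power2 A_def B_def add.assoc)
    also have "\<dots> = 4 * ((Re z - Re w)\<^sup>2 + (Im z - Im w)\<^sup>2) / (A*B)"
      using A unfolding A_def B_def by (simp add: divide_simps) algebra
    also have "\<dots> = (chordal (Some z) (Some w))\<^sup>2"
      using A by (simp add: power_divide power_mult_distrib cmod_power2 A_def B_def add.assoc
          real_sqrt_mult)
    finally show ?thesis by (simp add: power2_eq_iff_nonneg)
  qed
  show ?thesis
    by (cases a; cases b) (metis Some_None Some_Some dist_commute chordal.simps(2-4) dist_self)+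
qed

lemma chordal_commute: "chordal a b = chordal b a"
  by (simp add: chordal_eq_dist_stereo dist_commute)

lemma chordal_triangle: "chordal a b \<le> chordal a c + chordal c b"
  by (simp add: chordal_eq_dist_stereo dist_triangle)

lemma stereo_onto_sphere:
  assumes "norm p = 1"
  shows "p \<in> range stereo"
proof (cases p)
  case (Pair q t)
  have sphere: "(cmod q)\<^sup>2 + t\<^sup>2 = 1"
    using assms Pair by (simp add: norm_Pair)
  show ?thesis
  proof (cases "t = 1")
    case True
    then have "p = stereo None"
      using sphere Pair by simp
    then show ?thesis by blast
  next
    case False
    have "t\<^sup>2 \<le> 1"
      using sphere zero_le_power2[of "cmod q"] by linarith
    then have "t < 1"
      using False by (auto simp: abs_square_le_1 abs_le_iff)
    define z where "z = q / of_real (1 - t)"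
    have "(cmod q)\<^sup>2 = (1 - t) * (1 + t)"
      using sphere by (simp add: algebra_simps power2_eq_square)
    then have "(cmod z)\<^sup>2 = (1 + t) / (1 - t)"
      using \<open>t < 1\<close> by (simp add: z_def norm_divide power_divide power2_eq_square del: of_real_diff)
    then have "1 + (cmod z)\<^sup>2 = 2 / (1 - t)" "(cmod z)\<^sup>2 - 1 = 2 * t / (1 - t)"
      using \<open>t < 1\<close> by (simp_all add: field_simps)
    then have "2 / (1 + (cmod z)\<^sup>2) = 1 - t" "((cmod z)\<^sup>2 - 1) / (1 + (cmod z)\<^sup>2) = t"
      using \<open>t < 1\<close> by simp_all
    then have "stereo (Some z) = p"
      using \<open>t < 1\<close> Pair by (simp add: z_def scaleR_conv_of_real del: of_real_diff)
    then show ?thesis by blast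
  qed
qed

lemma chordal_le_dist: "chordal (Some u) (Some v) \<le> 2 * dist u v"
proof -
  have "1 \<le> sqrt (1 + (cmod u)\<^sup>2) * sqrt (1 + (cmod v)\<^sup>2)"
    using mult_mono[of 1 "sqrt (1 + (cmod u)\<^sup>2)" 1 "sqrt (1 + (cmod v)\<^sup>2)"] by simp
  then show ?thesis
    by (simp add: dist_norm divide_le_eq mult_le_cancel_left1 order_trans)
qed

lemma chordal_inverse:
  assumes "u \<noteq> 0" "v \<noteq> 0"
  shows "chordal (Some (inverse u)) (Some (inverse v)) = chordal (Some u) (Some v)"
proof -
  have sqrt_inverse: "sqrt (1 + (cmod (inverse w))\<^sup>2) = sqrt (1 + (cmod w)\<^sup>2) / cmod w"
    if "w \<noteq> 0" for w
  proof -
    have "1 + (cmod (inverse w))\<^sup>2 = (1 + (cmod w)\<^sup>2) / (cmod w)\<^sup>2"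
      using that by (simp add: norm_divide power_divide field_simps)
    then show ?thesis by (simp add: real_sqrt_divide)
  qed
  have "cmod (inverse u - inverse v) = cmod (u - v) / (cmod u * cmod v)"
    using assms by (simp add: inverse_diff_inverse norm_mult norm_inverse norm_minus_commute divide_inverse)
  then show ?thesis
    using assms by (simp add: sqrt_inverse)
qed

lemma chordal_lt_half_imp_norm_lt_2:
  assumes "cmod u \<le> 1" and "chordal (Some u) (Some v) < 1/2"
  shows "cmod v < 2"
proof (rule ccontr)
  assume "\<not> cmod v < 2"
  then have "4 \<le> (cmod v)\<^sup>2"
    using power_mono[of 2 "cmod v" 2] by simp
  then have "3/5 \<le> snd (stereo (Some v))"
    by (simp add: field_simps add_pos_nonneg)
  moreover have "snd (stereo (Some u)) \<le> 0"
    using assms(1) by (simp add: divide_nonpos_pos add_pos_nonneg power_le_one)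
  moreover have "snd (stereo (Some v)) - snd (stereo (Some u)) \<le> chordal (Some u) (Some v)"
    unfolding chordal_eq_dist_stereo dist_prod_def
    using real_sqrt_sum_squares_ge2 by (smt (verit) dist_real_def)
  ultimately show False
    using assms(2) by linarith
qed

lemma bounded_holomorphic_lipschitz_half_ball:
  assumes hol: "\<phi> holomorphic_on ball z \<delta>"
    and bounded: "\<And>w. w \<in> ball z \<delta> \<Longrightarrow> cmod (\<phi> w) < M"
    and a: "a \<in> ball z (\<delta>/2)" and b: "b \<in> ball z (\<delta>/2)"
  shows "cmod (\<phi> a - \<phi> b) \<le> 4 * M / \<delta> * cmod (a - b)"
proof (rule field_differentiable_bound[of "ball z (\<delta>/2)" \<phi> "deriv \<phi>"])
  have "\<delta> > 0"
    using a by (metis mem_ball zero_le_dist le_less_trans half_gt_zero_iff)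
  fix w assume w: "w \<in> ball z (\<delta>/2)"
  have sub: "cball w (\<delta>/4) \<subseteq> ball z \<delta>"
  proof
    fix y assume "y \<in> cball w (\<delta>/4)"
    then show "y \<in> ball z \<delta>"
      using w \<open>\<delta> > 0\<close> dist_triangle[of z y w] by simp
  qed
  then have "\<phi> field_differentiable (at w)"
    using hol \<open>\<delta> > 0\<close> holomorphic_on_imp_differentiable_at by (simp add: subset_iff)
  then show "(\<phi> has_field_derivative deriv \<phi> w) (at w within ball z (\<delta>/2))"
    using DERIV_deriv_iff_field_differentiable has_field_derivative_at_within by blast
  have "cmod ((deriv ^^ 1) \<phi> w) \<le> fact 1 * M / (\<delta>/4)^1"
  proof (rule Cauchy_higher_deriv_bound)
    show "\<phi> holomorphic_on ball w (\<delta>/4)"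
      using hol sub ball_subset_cball holomorphic_on_subset by blast
    show "continuous_on (cball w (\<delta>/4)) \<phi>"
      using hol sub holomorphic_on_imp_continuous_on continuous_on_subset by blast
    show "\<phi> w' \<in> ball 0 M" if "w' \<in> ball w (\<delta>/4)" for w'
      using bounded sub ball_subset_cball that by (force simp: dist_norm)
  qed (use \<open>\<delta> > 0\<close> in auto)
  then show "cmod (deriv \<phi> w) \<le> 4 * M / \<delta>"
    by (simp add: mult.commute)
qed (use a b in auto)

definition sph_osc_less :: "(complex \<Rightarrow> complex) \<Rightarrow> complex set \<Rightarrow> real \<Rightarrow> bool" where
  "sph_osc_less h S e \<longleftrightarrow> (\<forall>a\<in>S. \<forall>b\<in>S. chordal (Some (h a)) (Some (h b)) < e)"

lemma sph_osc_less_subset: "sph_osc_less h S e \<Longrightarrow> T \<subseteq> S \<Longrightarrow> sph_osc_less h T e"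
  unfolding sph_osc_less_def by blast

lemma chordal_lipschitz_half_ball_if_sph_osc_less:
  assumes hol: "h holomorphic_on ball z \<delta>"
    and osc: "sph_osc_less h (ball z \<delta>) (1/2)"
    and a: "a \<in> ball z (\<delta>/2)" and b: "b \<in> ball z (\<delta>/2)"
  shows "chordal (Some (h a)) (Some (h b)) \<le> 16 / \<delta> * cmod (a - b)"
proof -
  have "\<delta> > 0"
    using a by (metis mem_ball zero_le_dist le_less_trans half_gt_zero_iff)
  then have ab: "a \<in> ball z \<delta>" "b \<in> ball z \<delta>"
    using a b subset_ball[of "\<delta>/2" \<delta> z] by auto
  consider "\<And>w. w \<in> ball z \<delta> \<Longrightarrow> cmod (h w) < 2"
    | "\<And>w. w \<in> ball z \<delta> \<Longrightarrow> 1 < cmod (h w)"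
    using osc chordal_lt_half_imp_norm_lt_2 unfolding sph_osc_less_def by (meson not_le)
  then show ?thesis
  proof cases
    case 1
    have "chordal (Some (h a)) (Some (h b)) \<le> 2 * cmod (h a - h b)"
      using chordal_le_dist by (simp add: dist_norm)
    also have "\<dots> \<le> 2 * (4 * 2 / \<delta> * cmod (a - b))"
      using bounded_holomorphic_lipschitz_half_ball[OF hol 1 a b] by simp
    finally show ?thesis by simp
  next
    case 2
    have nonzero: "h w \<noteq> 0" and inverse_bounded: "cmod (inverse (h w)) < 2"
      if "w \<in> ball z \<delta>" for w
      using 2[OF that] by (auto simp: norm_inverse) (smt (verit) inverse_less_1_iff)
    have "chordal (Some (h a)) (Some (h b)) = chordal (Some (inverse (h a))) (Some (inverse (h b)))"
      using chordal_inverse nonzero ab by metis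
    also have "\<dots> \<le> 2 * cmod (inverse (h a) - inverse (h b))"
      using chordal_le_dist by (simp add: dist_norm)
    also have "\<dots> \<le> 2 * (4 * 2 / \<delta> * cmod (a - b))"
    proof -
      have "(\<lambda>w. inverse (h w)) holomorphic_on ball z \<delta>"
        using hol nonzero by (intro holomorphic_on_inverse) auto
      then have "cmod (inverse (h a) - inverse (h b)) \<le> 4 * 2 / \<delta> * cmod (a - b)"
        by (rule bounded_holomorphic_lipschitz_half_ball) (use inverse_bounded a b in auto)
      then show ?thesis by simp
    qed
    finally show ?thesis by simp
  qed
qed

lemma sph_unif_conv_on_subset:
  assumes "sph_unif_conv_on F g S" and "T \<subseteq> S"
  shows "sph_unif_conv_on F g T"
  unfolding sph_unif_conv_on_def
proof (intro allI impI)
  fix e :: real assume "e > 0"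
  then have "\<forall>\<^sub>F n in sequentially. \<forall>z\<in>S. chordal (Some (F n z)) (g z) < e"
    using assms(1) unfolding sph_unif_conv_on_def by blast
  then show "\<forall>\<^sub>F n in sequentially. \<forall>z\<in>T. chordal (Some (F n z)) (g z) < e"
    by (rule eventually_mono) (use assms(2) in blast)
qed

lemma sph_unif_conv_subseq_if_sph_osc_less:
  fixes h :: "nat \<Rightarrow> complex \<Rightarrow> complex"
  assumes S: "compact S" and "\<delta> > 0"
    and hol: "\<And>n z. z \<in> S \<Longrightarrow> h n holomorphic_on ball z \<delta>"
    and osc: "\<And>n z. z \<in> S \<Longrightarrow> sph_osc_less (h n) (ball z \<delta>) (1/2)"
  shows "\<exists>s g. strict_mono s \<and> sph_unif_conv_on (h \<circ> s) g S"
proof -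
  define F where "F n z = stereo (Some (h n z))" for n z
  obtain G s where s: "strict_mono (s :: nat \<Rightarrow> nat)"
    and conv: "\<And>e. 0 < e \<Longrightarrow> \<exists>N. \<forall>n z. n \<ge> N \<and> z \<in> S \<longrightarrow> norm (F (s n) z - G z) < e"
  proof (rule Arzela_Ascoli[OF S, of F 1])
    show "norm (F n z) \<le> 1" for n z
      unfolding F_def norm_stereo by (rule order_refl)
    fix z e assume z: "z \<in> S" and "(0::real) < e"
    define d where "d = min (\<delta>/2) (e * \<delta> / 32)"
    have "norm (F n z - F n y) < e" if "y \<in> S" "norm (z - y) < d" for n y
    proof -
      have "chordal (Some (h n z)) (Some (h n y)) \<le> 16 / \<delta> * cmod (z - y)"
        using that \<open>\<delta> > 0\<close> hol[OF z] osc[OF z]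
        by (intro chordal_lipschitz_half_ball_if_sph_osc_less) (auto simp: d_def dist_norm)
      also have "\<dots> \<le> 16 / \<delta> * (e * \<delta> / 32)"
        using that \<open>\<delta> > 0\<close> by (intro mult_left_mono) (auto simp: d_def)
      also have "\<dots> < e"
        using \<open>\<delta> > 0\<close> \<open>e > 0\<close> by simp
      finally show ?thesis
        by (simp add: F_def chordal_eq_dist_stereo dist_norm)
    qed
    moreover have "d > 0"
      using \<open>\<delta> > 0\<close> \<open>e > 0\<close> by (simp add: d_def)
    ultimately show "\<exists>d>0. \<forall>n y. y \<in> S \<and> norm (z - y) < d \<longrightarrow> norm (F n z - F n y) < e"
      by blast
  qed blast
  have "norm (G z) = 1" if "z \<in> S" for z
  proof -
    have "(\<lambda>n. F (s n) z) \<longlonglongrightarrow> G z"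
      unfolding LIMSEQ_iff using conv that by meson
    then have "(\<lambda>n. norm (F (s n) z)) \<longlonglongrightarrow> norm (G z)"
      by (rule tendsto_norm)
    then show ?thesis
      unfolding F_def norm_stereo by (simp add: LIMSEQ_const_iff)
  qed
  then have stereo_inv: "stereo (inv stereo (G z)) = G z" if "z \<in> S" for z
    using that stereo_onto_sphere by (simp add: f_inv_into_f)
  have "sph_unif_conv_on (h \<circ> s) (\<lambda>z. inv stereo (G z)) S"
    unfolding sph_unif_conv_on_def eventually_sequentially
  proof (intro allI impI)
    fix e :: real assume "e > 0"
    then obtain N where "\<And>n z. n \<ge> N \<Longrightarrow> z \<in> S \<Longrightarrow> norm (F (s n) z - G z) < e"
      using conv by blast
    then show "\<exists>N. \<forall>n\<ge>N. \<forall>z\<in>S. chordal (Some ((h \<circ> s) n z)) (inv stereo (G z)) < e"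
      by (auto simp: chordal_eq_dist_stereo stereo_inv dist_norm F_def simp del: stereo.simps)
  qed
  then show ?thesis
    using s by blast
qed

lemma normal_seq_on_half_ball_if_eventually_sph_osc_less:
  assumes "r > 0" and hol: "\<And>n. f n holomorphic_on ball x r"
    and "eventually (\<lambda>n. sph_osc_less (f n) (ball x r) (1/2)) sequentially"
  shows "normal_seq_on f (ball x (r/2))"
  unfolding normal_seq_on_def
proof (intro allI impI)
  fix q :: "nat \<Rightarrow> nat" assume "strict_mono q"
  obtain N where N: "\<And>n. n \<ge> N \<Longrightarrow> sph_osc_less (f n) (ball x r) (1/2)"
    using assms(3) unfolding eventually_sequentially by blast
  have balls: "ball z (r/2) \<subseteq> ball x r" if "z \<in> cball x (r/2)" for z
  proof
    fix y assume "y \<in> ball z (r/2)"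
    then show "y \<in> ball x r"
      using that dist_triangle[of x y z] by simp
  qed
  have "\<exists>s g. strict_mono s \<and> sph_unif_conv_on ((\<lambda>n. f (q (n + N))) \<circ> s) g (cball x (r/2))"
  proof (rule sph_unif_conv_subseq_if_sph_osc_less)
    fix n z assume "z \<in> cball x (r/2)"
    then show "f (q (n + N)) holomorphic_on ball z (r/2)"
      using hol balls holomorphic_on_subset by blast
    have "q (n + N) \<ge> N"
      using seq_suble[OF \<open>strict_mono q\<close>, of "n + N"] by simp
    then show "sph_osc_less (f (q (n + N))) (ball z (r/2)) (1/2)"
      using N balls \<open>z \<in> cball x (r/2)\<close> sph_osc_less_subset by blast
  qed (use \<open>r > 0\<close> in auto)
  then obtain s g where "strict_mono s"
    and conv: "sph_unif_conv_on (f \<circ> q \<circ> (\<lambda>n. s n + N)) g (cball x (r/2))"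
    by (auto simp: comp_def)
  have "sph_loc_unif_conv_on (f \<circ> q \<circ> (\<lambda>n. s n + N)) g (ball x (r/2))"
    unfolding sph_loc_unif_conv_on_def
    using conv ball_subset_cball sph_unif_conv_on_subset by blast
  moreover have "strict_mono (\<lambda>n. s n + N)"
    using \<open>strict_mono s\<close> by (simp add: strict_mono_def)
  ultimately show "\<exists>s g. strict_mono s \<and> sph_loc_unif_conv_on (f \<circ> q \<circ> s) g (ball x (r/2))"
    by blast
qed

lemma eventually_sph_osc_less_if_sph_unif_conv_on:
  assumes "open V" and "x \<in> V" and cont: "\<And>n. isCont (F n) x"
    and conv: "sph_unif_conv_on F g V" and "e > 0"
  shows "\<exists>\<delta>>0. eventually (\<lambda>n. sph_osc_less (F n) (ball x \<delta>) e) sequentially"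
proof -
  txt \<open>The limit g need not be continuous: continuity at x is taken from the single
    member F N and transported to all later F n through their closeness to g.\<close>
  obtain N where N: "\<And>n z. n \<ge> N \<Longrightarrow> z \<in> V \<Longrightarrow> chordal (Some (F n z)) (g z) < e/5"
    using conv \<open>e > 0\<close> unfolding sph_unif_conv_on_def eventually_sequentially
    by (meson divide_pos_pos zero_less_numeral)
  obtain \<eta> where "\<eta> > 0" and \<eta>: "\<And>y. dist y x < \<eta> \<Longrightarrow> dist (F N y) (F N x) < e/20"
    using cont[of N] \<open>e > 0\<close> unfolding continuous_at_eps_delta
    by (meson divide_pos_pos zero_less_numeral)
  obtain \<epsilon> where "\<epsilon> > 0" "ball x \<epsilon> \<subseteq> V"
    using \<open>open V\<close> \<open>x \<in> V\<close> open_contains_ball by blast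
  define \<delta> where "\<delta> = min \<eta> \<epsilon>"
  have "sph_osc_less (F n) (ball x \<delta>) e" if "n \<ge> N" for n
    unfolding sph_osc_less_def
  proof (intro ballI)
    fix a b assume ab: "a \<in> ball x \<delta>" "b \<in> ball x \<delta>"
    then have "a \<in> V" "b \<in> V"
      using \<open>ball x \<epsilon> \<subseteq> V\<close> by (auto simp: \<delta>_def)
    have "chordal (Some (F N a)) (Some (F N b)) \<le> 2 * dist (F N a) (F N b)"
      by (rule chordal_le_dist)
    also have "\<dots> \<le> 2 * (dist (F N a) (F N x) + dist (F N b) (F N x))"
      using dist_triangle2[of "F N a" "F N b" "F N x"] by simp
    also have "\<dots> < e/5"
      using \<eta>[of a] \<eta>[of b] ab by (simp add: \<delta>_def dist_commute)
    finally have "chordal (Some (F N a)) (Some (F N b)) < e/5" .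
    moreover have "chordal (Some (F n a)) (Some (F n b)) \<le> chordal (Some (F n a)) (g a)
        + chordal (Some (F N a)) (g a) + chordal (Some (F N a)) (Some (F N b))
        + chordal (Some (F N b)) (g b) + chordal (Some (F n b)) (g b)"
      using chordal_triangle[where a = "Some (F n a)" and b = "Some (F n b)" and c = "g a"]
        chordal_triangle[where a = "g a" and b = "Some (F n b)" and c = "Some (F N a)"]
        chordal_triangle[where a = "Some (F N a)" and b = "Some (F n b)" and c = "Some (F N b)"]
        chordal_triangle[where a = "Some (F N b)" and b = "Some (F n b)" and c = "g b"]
        chordal_commute[where a = "g a" and b = "Some (F N a)"]
        chordal_commute[where a = "g b" and b = "Some (F n b)"]
      by linarith
    ultimately show "chordal (Some (F n a)) (Some (F n b)) < e"
      using N[OF that \<open>a \<in> V\<close>] N[OF that \<open>b \<in> V\<close>]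
        N[OF order_refl \<open>a \<in> V\<close>] N[OF order_refl \<open>b \<in> V\<close>]
      by linarith
  qed
  moreover have "\<delta> > 0"
    using \<open>\<eta> > 0\<close> \<open>\<epsilon> > 0\<close> by (simp add: \<delta>_def)
  ultimately show ?thesis
    unfolding eventually_sequentially by blast
qed

lemma strict_mono_choice:
  assumes "\<And>k N. \<exists>n\<ge>N. P k n"
  obtains r :: "nat \<Rightarrow> nat" where "strict_mono r" and "\<And>k. P k (r k)"
proof -
  have "\<exists>r. \<forall>k. P k (r k) \<and> r k < r (Suc k)"
  proof (rule dependent_nat_choice)
    show "\<exists>n. P 0 n"
      using assms by blast
    show "\<exists>n'. P (Suc k) n' \<and> n < n'" for n k
      using assms[where k = "Suc k" and N = "Suc n"] by (auto simp: Suc_le_eq)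
  qed
  then show ?thesis
    using that by (auto simp: strict_mono_Suc_iff)
qed

lemma not_sph_unif_conv_on_subseq_if_osc_concentrates:
  assumes large_osc: "\<And>k. \<not> sph_osc_less (F k) (ball x (\<rho> / Suc k)) (1/2)"
    and cont: "\<And>k. isCont (F k) x"
    and "strict_mono s" and "open V" and "x \<in> V"
  shows "\<not> sph_unif_conv_on (F \<circ> s) g V"
proof
  assume "sph_unif_conv_on (F \<circ> s) g V"
  then obtain \<delta> where "\<delta> > 0"
    and small_osc: "eventually (\<lambda>n. sph_osc_less (F (s n)) (ball x \<delta>) (1/2)) sequentially"
    using eventually_sph_osc_less_if_sph_unif_conv_on[of V x "F \<circ> s" g "1/2"] assms(4,5) cont
    by auto
  have "(\<lambda>k. \<rho> / real (Suc k)) \<longlonglongrightarrow> 0"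
    using LIMSEQ_Suc[OF lim_const_over_n] by simp
  then have "eventually (\<lambda>k. \<rho> / Suc k < \<delta>) sequentially"
    using \<open>\<delta> > 0\<close> by (rule order_tendstoD)
  then have "eventually (\<lambda>n. \<rho> / Suc (s n) < \<delta>) sequentially"
    by (rule eventually_subseq[OF \<open>strict_mono s\<close>])
  with small_osc obtain n where "sph_osc_less (F (s n)) (ball x \<delta>) (1/2)" "\<rho> / Suc (s n) < \<delta>"
    using eventually_happens'[OF sequentially_bot eventually_conj] by blast
  then have "sph_osc_less (F (s n)) (ball x (\<rho> / Suc (s n))) (1/2)"
    using sph_osc_less_subset subset_ball by (metis less_imp_le)
  with large_osc show False
    by blast
qed

theorem mainTheorem5:
  fixes \<Omega> :: "complex set" and x :: complex and f :: "nat \<Rightarrow> complex \<Rightarrow> complex"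
  assumes "open \<Omega>" and "connected \<Omega>" and "x \<in> \<Omega>"
    and "\<And>n. f n holomorphic_on \<Omega>"
    and "\<And>V. open V \<Longrightarrow> x \<in> V \<Longrightarrow> V \<subseteq> \<Omega> \<Longrightarrow> \<not> normal_seq_on f V"
  shows "\<exists>r::nat\<Rightarrow>nat. strict_mono r \<and>
           (\<forall>(s::nat\<Rightarrow>nat) V. strict_mono s \<longrightarrow> open V \<longrightarrow> x \<in> V \<longrightarrow> V \<subseteq> \<Omega> \<longrightarrow>
              \<not> (\<exists>g. sph_unif_conv_on (f \<circ> r \<circ> s) g V))"
proof -
  obtain \<rho> where "\<rho> > 0" and "ball x \<rho> \<subseteq> \<Omega>"
    using assms(1,3) open_contains_ball by blast
  have "\<exists>n\<ge>N. \<not> sph_osc_less (f n) (ball x (\<rho> / Suc k)) (1/2)" for k N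
  proof (rule ccontr)
    define r where "r = \<rho> / Suc k"
    have "r > 0" and "r \<le> \<rho>"
      using \<open>\<rho> > 0\<close> by (auto simp: r_def field_simps)
    then have "ball x r \<subseteq> \<Omega>" and "ball x (r/2) \<subseteq> \<Omega>"
      using \<open>ball x \<rho> \<subseteq> \<Omega>\<close> subset_ball[of r \<rho> x] subset_ball[of "r/2" \<rho> x] by auto
    have "f n holomorphic_on ball x r" for n
      using assms(4) \<open>ball x r \<subseteq> \<Omega>\<close> by (rule holomorphic_on_subset)
    moreover assume "\<not> (\<exists>n\<ge>N. \<not> sph_osc_less (f n) (ball x (\<rho> / Suc k)) (1/2))"
    ultimately have "normal_seq_on f (ball x (r/2))"
      using \<open>r > 0\<close>
      by (intro normal_seq_on_half_ball_if_eventually_sph_osc_less) (auto simp: r_def eventually_sequentially)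
    then show False
      using assms(5) \<open>r > 0\<close> \<open>ball x (r/2) \<subseteq> \<Omega>\<close> by simp
  qed
  then obtain r where "strict_mono r" and large_osc: "\<And>k. \<not> sph_osc_less (f (r k)) (ball x (\<rho> / Suc k)) (1/2)"
    by (rule strict_mono_choice[where P = "\<lambda>k n. \<not> sph_osc_less (f n) (ball x (\<rho> / Suc k)) (1/2)"]) blast
  have "isCont ((f \<circ> r) k) x" for k
    using holomorphic_on_imp_continuous_on[OF assms(4)] assms(1,3)
    by (simp add: continuous_on_eq_continuous_at)
  moreover have "\<not> sph_osc_less ((f \<circ> r) k) (ball x (\<rho> / Suc k)) (1/2)" for k
    using large_osc by simp
  ultimately show ?thesis
    using \<open>strict_mono r\<close> not_sph_unif_conv_on_subseq_if_osc_concentrates by blast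
qed

end
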